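(* Let $\kappa, m, n$ be positive integers with $m$ and $n$ coprime, and suppose there is an integer $s$ with \[ \kappa^4 m^4 n^4 - 32\kappa(m^2+n^2) = s^2. \] Then $(\kappa, m, n) = (4, 1, 1)$. *)

theory Defs
  imports Main
begin

end

theory Submission
  imports Defs
begin

text \<open>
  Put \<open>A = \<kappa>\<^sup>2 m\<^sup>2 n\<^sup>2\<close>. Then \<open>A\<^sup>2 - s\<^sup>2 = 32 \<kappa> (m\<^sup>2 + n\<^sup>2)\<close>, so \<open>A - \<bar>s\<bar> = 2e\<close> and
  \<open>A + \<bar>s\<bar> = 2(A - e)\<close> with \<open>e (A - e) = 8 \<kappa> (m\<^sup>2 + n\<^sup>2)\<close>. Since \<open>e \<le> A/2\<close> the product
  is at least \<open>e A / 2\<close>; for \<open>m \<le> n\<close> this gives \<open>e \<kappa> m\<^sup>2 \<le> 32\<close>. Rewriting the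
  equation as \<open>n\<^sup>2 (e \<kappa>\<^sup>2 m\<^sup>2 - 8 \<kappa>) = 8 \<kappa> m\<^sup>2 + e\<^sup>2\<close> also bounds \<open>n\<close>, and a finite
  search leaves only \<open>(4, 1, 1)\<close> and the non-coprime \<open>(1, 2, 2)\<close>.
\<close>

lemma difference_of_squares_halves:
  fixes a s M :: int
  assumes "a > 0" and "M > 0" and "a^2 - s^2 = 4 * M"
  obtains e where "1 \<le> e" and "2 * e \<le> a" and "e * (a - e) = M"
proof -
  define t where "t = \<bar>s\<bar>"
  have t_sq: "a^2 - t^2 = 4 * M"
    using assms(3) by (simp add: t_def)
  have "t^2 < a^2"
    using t_sq \<open>M > 0\<close> by linarith
  then have "t < a"
    using \<open>a > 0\<close> by (metis power_less_imp_less_base less_imp_le)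
  have "even (a - t)"
  proof (rule ccontr)
    assume "odd (a - t)"
    then have "odd ((a - t) * (a + t))"
      by simp
    moreover have "(a - t) * (a + t) = 4 * M"
      using t_sq by (simp add: algebra_simps power2_eq_square)
    ultimately show False
      by simp
  qed
  then obtain e where e: "a - t = 2 * e"
    by blast
  show thesis
  proof
    show "1 \<le> e" and "2 * e \<le> a"
      using e \<open>t < a\<close> by (auto simp: t_def)
    have "4 * (e * (a - e)) = (a - t) * (a + t)"
      using e by (simp add: algebra_simps)
    then show "e * (a - e) = M"
      using t_sq by (simp add: algebra_simps power2_eq_square)
  qed
qed

lemma solution_reduced_equation:
  fixes \<kappa> m n s :: int
  assumes "\<kappa> > 0" and "m > 0" and "m \<le> n"
    and "\<kappa>^4 * m^4 * n^4 - 32 * \<kappa> * (m^2 + n^2) = s^2"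
  obtains e where "1 \<le> e" and "e * \<kappa> * m^2 \<le> 32"
    and "n^2 * (e * \<kappa>^2 * m^2 - 8 * \<kappa>) = 8 * \<kappa> * m^2 + e^2"
proof -
  define A where "A = \<kappa>^2 * m^2 * n^2"
  have "n > 0"
    using assms(2,3) by linarith
  have "A > 0"
    using assms(1,2) \<open>n > 0\<close> by (simp add: A_def)
  moreover have "8 * \<kappa> * (m^2 + n^2) > 0"
    using assms(1,2) by (simp add: add_pos_nonneg)
  moreover have "A^2 - s^2 = 4 * (8 * \<kappa> * (m^2 + n^2))"
    using assms(4) by (simp add: A_def power_mult_distrib flip: power_mult)
  ultimately obtain e where e: "1 \<le> e" "2 * e \<le> A" and prod: "e * (A - e) = 8 * \<kappa> * (m^2 + n^2)"
    by (rule difference_of_squares_halves)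
  show thesis
  proof
    show "1 \<le> e"
      by (fact e(1))
    have "e * (2 * e) \<le> e * A"
      using e by (intro mult_left_mono) auto
    then have "e * A \<le> 2 * (e * (A - e))"
      by (simp add: algebra_simps)
    also have "\<dots> \<le> 16 * \<kappa> * (2 * n^2)"
      using prod assms(1-3) by (simp add: power_mono)
    finally have "(e * \<kappa> * m^2) * (\<kappa> * n^2) \<le> 32 * (\<kappa> * n^2)"
      by (simp add: A_def algebra_simps power2_eq_square)
    then show "e * \<kappa> * m^2 \<le> 32"
      using assms(1) \<open>n > 0\<close> by (simp add: mult_le_cancel_right)
    show "n^2 * (e * \<kappa>^2 * m^2 - 8 * \<kappa>) = 8 * \<kappa> * m^2 + e^2"
      using prod by (simp add: A_def algebra_simps power2_eq_square)
  qed
qed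

lemma le_div_if_mult_le:
  fixes a b c :: int
  assumes "b > 0" and "a * b \<le> c"
  shows "a \<le> c div b"
  using zdiv_mono1[OF assms(2,1)] assms(1) by simp

lemma reduced_equation_search:
  "\<forall>m\<in>{1..5::int}. \<forall>\<kappa>\<in>{1..32 div m^2}. \<forall>e\<in>{1..32 div (\<kappa> * m^2)}. \<forall>n\<in>{1..36}.
     n^2 * (e * \<kappa>^2 * m^2 - 8 * \<kappa>) = 8 * \<kappa> * m^2 + e^2 \<longrightarrow> (\<kappa>, m, n) \<in> {(4, 1, 1), (1, 2, 2)}"
  by (simp only: set_upto [symmetric]) code_simp

lemma reduced_equation_solutions:
  fixes \<kappa> m n e :: int
  assumes "\<kappa> > 0" and "m > 0" and "n > 0" and "e \<ge> 1" and bound: "e * \<kappa> * m^2 \<le> 32"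
    and eq: "n^2 * (e * \<kappa>^2 * m^2 - 8 * \<kappa>) = 8 * \<kappa> * m^2 + e^2"
  shows "(\<kappa>, m, n) \<in> {(4, 1, 1), (1, 2, 2)}"
proof -
  have "m^2 \<ge> 1"
    using assms(2) by (simp add: one_le_power)
  then have "\<kappa> * m^2 \<ge> 1"
    using assms(1) by (smt (verit) mult_le_cancel_left1)
  have km_le: "\<kappa> * m^2 \<le> 32"
    using bound \<open>e \<ge> 1\<close> \<open>\<kappa> * m^2 \<ge> 1\<close> mult_right_mono[of 1 e "\<kappa> * m^2"] by (simp add: mult.assoc)
  have "e * 1 \<le> e * (\<kappa> * m^2)"
    using \<open>\<kappa> * m^2 \<ge> 1\<close> \<open>e \<ge> 1\<close> by (intro mult_left_mono) auto
  then have e_le: "e \<le> 32"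
    using bound by (simp add: mult.assoc)
  have "m^2 \<le> \<kappa> * m^2"
    using \<open>\<kappa> > 0\<close> mult_right_mono[of 1 \<kappa> "m^2"] by simp
  then have "m^2 < 6^2"
    using km_le by simp
  then have "m \<le> 5"
    using assms(2) power_less_imp_less_base[of m 2 6] by linarith
  have "\<kappa> \<le> 32 div m^2"
    using km_le \<open>m^2 \<ge> 1\<close> by (intro le_div_if_mult_le) auto
  moreover have "e \<le> 32 div (\<kappa> * m^2)"
    using bound \<open>\<kappa> * m^2 \<ge> 1\<close> by (intro le_div_if_mult_le) (auto simp: mult.assoc)
  moreover have "n \<le> 36"
  proof -
    have "8 * \<kappa> * m^2 + e^2 > 0"
      using assms(1,2) by (simp add: add_pos_nonneg)
    then have "e * \<kappa>^2 * m^2 - 8 * \<kappa> \<ge> 1"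
      using eq by (smt (verit) mult_nonneg_nonpos zero_le_power2)
    then have "n^2 \<le> 8 * \<kappa> * m^2 + e^2"
      using eq by (metis mult.right_neutral mult_left_mono zero_le_power2)
    also have "\<dots> \<le> 8 * 32 + 32^2"
      using km_le e_le \<open>e \<ge> 1\<close> power_mono[of e 32 2] by simp
    finally have "n^2 < 36^2"
      by simp
    then show ?thesis
      using assms(3) power_less_imp_less_base[of n 2 36] by linarith
  qed
  ultimately show ?thesis
    using reduced_equation_search eq assms(1-4) \<open>m \<le> 5\<close> by auto
qed

lemma solutions_ordered:
  fixes \<kappa> m n s :: int
  assumes "\<kappa> > 0" and "m > 0" and "m \<le> n"
    and "\<kappa>^4 * m^4 * n^4 - 32 * \<kappa> * (m^2 + n^2) = s^2"
  shows "(\<kappa>, m, n) \<in> {(4, 1, 1), (1, 2, 2)}"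
proof -
  obtain e where "1 \<le> e" "e * \<kappa> * m^2 \<le> 32"
    "n^2 * (e * \<kappa>^2 * m^2 - 8 * \<kappa>) = 8 * \<kappa> * m^2 + e^2"
    using assms by (rule solution_reduced_equation)
  then show ?thesis
    using assms(1-3) by (intro reduced_equation_solutions) auto
qed

theorem theorem5:
  fixes \<kappa> m n s :: int
  assumes "\<kappa> > 0" and "m > 0" and "n > 0"
    and "coprime m n"
    and "\<kappa>^4 * m^4 * n^4 - 32 * \<kappa> * (m^2 + n^2) = s^2"
  shows "(\<kappa>, m, n) = (4, 1, 1)"
proof (cases "m \<le> n")
  case True
  then have "(\<kappa>, m, n) \<in> {(4, 1, 1), (1, 2, 2)}"
    using assms by (intro solutions_ordered) auto
  then show ?thesis
    using \<open>coprime m n\<close> by auto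
next
  case False
  then have "(\<kappa>, n, m) \<in> {(4, 1, 1), (1, 2, 2)}"
    using assms by (intro solutions_ordered[of \<kappa> n m s]) (auto simp: algebra_simps)
  then show ?thesis
    using False by auto
qed

end
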